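(* If $\mathbf A=\langle A,\vee,0,\mathscr F\rangle$ is a semilattice with operators, then $\operatorname{Con}\mathbf A\cong\operatorname{Don}\mathbf A\cong\operatorname{Eon}\mathbf A$.
   Context: A semilattice with operators is a join semilattice with least element $0$ together with a set $\mathscr F$ of unary maps each preserving $\vee$ and $0$. A relation on $A$ is compatible if it is compatible with $\vee$ and with every $f\in\mathscr F$. $\operatorname{Con}\mathbf A$ is the lattice of congruences. $\operatorname{Don}\mathbf A$ is the lattice (under inclusion) of all reflexive, transitive, compatible relations $R$ such that $x\ge y$ implies $x\,R\,y$. $\operatorname{Eon}\mathbf A$ is the lattice of all reflexive, transitive, compatible relations $R$ such that (1) $x\,R\,y$ implies $x\le y$, and (2) if $x\le y\le z$ and $x\,R\,z$ then $x\,R\,y$. *)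

theory Defs
  imports Main
begin

text \<open>A semilattice with operators: the join semilattice with least element is the type
  'a of class bounded_semilattice_sup_bot (join = sup, 0 = bot, order: x \<le> y iff sup x y = y);
  the set of operators is F, each preserving join and 0.\<close>

definition operators :: "('a::bounded_semilattice_sup_bot \<Rightarrow> 'a) set \<Rightarrow> bool" where
  "operators F \<longleftrightarrow> (\<forall>f\<in>F. (\<forall>x y. f (sup x y) = sup (f x) (f y)) \<and> f bot = bot)"

definition compatible :: "('a::bounded_semilattice_sup_bot \<Rightarrow> 'a) set \<Rightarrow> 'a rel \<Rightarrow> bool" where
  "compatible F R \<longleftrightarrow>
     (\<forall>x y u v. (x, y) \<in> R \<and> (u, v) \<in> R \<longrightarrow> (sup x u, sup y v) \<in> R) \<and>
     (\<forall>f\<in>F. \<forall>x y. (x, y) \<in> R \<longrightarrow> (f x, f y) \<in> R)"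

definition Con :: "('a::bounded_semilattice_sup_bot \<Rightarrow> 'a) set \<Rightarrow> 'a rel set" where
  "Con F = {R. refl R \<and> sym R \<and> trans R \<and> compatible F R}"

definition Don :: "('a::bounded_semilattice_sup_bot \<Rightarrow> 'a) set \<Rightarrow> 'a rel set" where
  "Don F = {R. refl R \<and> trans R \<and> compatible F R \<and> (\<forall>x y. y \<le> x \<longrightarrow> (x, y) \<in> R)}"

definition Eon :: "('a::bounded_semilattice_sup_bot \<Rightarrow> 'a) set \<Rightarrow> 'a rel set" where
  "Eon F = {R. refl R \<and> trans R \<and> compatible F R \<and>
               (\<forall>x y. (x, y) \<in> R \<longrightarrow> x \<le> y) \<and>
               (\<forall>x y z. x \<le> y \<and> y \<le> z \<and> (x, z) \<in> R \<longrightarrow> (x, y) \<in> R)}"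

text \<open>Isomorphism of the lattices (collections of relations ordered by inclusion):
  an order isomorphism, i.e. a bijection preserving and reflecting inclusion.
  For lattices, order isomorphisms are exactly lattice isomorphisms.\<close>

definition incl_iso :: "'a rel set \<Rightarrow> 'a rel set \<Rightarrow> bool" where
  "incl_iso L M \<longleftrightarrow> (\<exists>h. bij_betw h L M \<and> (\<forall>R\<in>L. \<forall>S\<in>L. R \<subseteq> S \<longleftrightarrow> h R \<subseteq> h S))"

end

theory Submission
  imports Defs
begin

text \<open>A congruence \<theta> is recovered from the quasi-order "x \<theta> x \<squnion> y" it induces on the
  quotient semilattice, and from that quasi-order by taking its symmetric part; the elements
  of Don are exactly such induced quasi-orders. Restricting a member of Don to pairs x \<le> y
  gives a member of Eon, and "x R x \<squnion> y" recovers it again. Both passages are monotone,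
  so they are inclusion isomorphisms. The only nontrivial point is transitivity of the
  induced quasi-order, which needs the convexity built into Eon and automatic for
  congruences.\<close>

lemma incl_isoI:
  assumes "\<And>R. R \<in> L \<Longrightarrow> g R \<in> M" "\<And>S. S \<in> M \<Longrightarrow> k S \<in> L"
    and "\<And>R. R \<in> L \<Longrightarrow> k (g R) = R" "\<And>S. S \<in> M \<Longrightarrow> g (k S) = S"
    and "\<And>R S. R \<subseteq> S \<Longrightarrow> g R \<subseteq> g S" "\<And>R S. R \<subseteq> S \<Longrightarrow> k R \<subseteq> k S"
  shows "incl_iso L M"
  unfolding incl_iso_def
proof (intro exI conjI ballI)
  show "bij_betw g L M" by (rule bij_betw_byWitness[where f'=k]) (use assms in auto)
  fix R S assume "R \<in> L" "S \<in> L"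
  then show "R \<subseteq> S \<longleftrightarrow> g R \<subseteq> g S"
    using assms(5)[of R S] assms(6)[of "g R" "g S"] assms(3) by metis
qed

lemma operators_sup: "operators F \<Longrightarrow> f \<in> F \<Longrightarrow> f (sup x y) = sup (f x) (f y)"
  unfolding operators_def by blast

lemma operators_mono:
  assumes "operators F" "f \<in> F" "(x::'a::bounded_semilattice_sup_bot) \<le> y"
  shows "f x \<le> f y"
  by (metis assms operators_sup sup.absorb_iff2 sup.cobounded1)

lemma compatibleI:
  assumes "\<And>x y u v. (x, y) \<in> R \<Longrightarrow> (u, v) \<in> R \<Longrightarrow> (sup x u, sup y v) \<in> R"
    and "\<And>f x y. f \<in> F \<Longrightarrow> (x, y) \<in> R \<Longrightarrow> (f x, f y) \<in> R"
  shows "compatible F R"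
  using assms unfolding compatible_def by blast

lemma compatible_supD:
  "compatible F R \<Longrightarrow> (x, y) \<in> R \<Longrightarrow> (u, v) \<in> R \<Longrightarrow> (sup x u, sup y v) \<in> R"
  unfolding compatible_def by blast

lemma compatible_operatorD:
  "compatible F R \<Longrightarrow> f \<in> F \<Longrightarrow> (x, y) \<in> R \<Longrightarrow> (f x, f y) \<in> R"
  unfolding compatible_def by blast

lemma Con_convex:
  assumes "T \<in> Con F" "x \<le> y" "y \<le> z" "(x, z) \<in> T"
  shows "(x, y) \<in> T"
proof -
  have T: "refl T" "sym T" "trans T" "compatible F T" using assms(1) unfolding Con_def by auto
  have "(sup x y, sup z y) \<in> T"
    using compatible_supD[OF T(4) assms(4)] T(1) by (simp add: refl_on_def)
  then have "(z, y) \<in> T" using assms(2,3) T(2) by (simp add: sup.absorb2 sup.absorb1 symD)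
  with assms(4) T(3) show ?thesis by (meson transD)
qed

lemma Don_sup_iff:
  assumes "R \<in> Don F"
  shows "(x, sup x y) \<in> R \<longleftrightarrow> (x, y) \<in> R"
proof -
  have R: "refl R" "trans R" "compatible F R" "\<And>x y. y \<le> x \<Longrightarrow> (x, y) \<in> R"
    using assms unfolding Don_def by auto
  have "(x, y) \<in> R" if "(x, sup x y) \<in> R"
    using that R(2) R(4)[of y "sup x y"] by (meson sup.cobounded2 transD)
  moreover have "(x, sup x y) \<in> R" if "(x, y) \<in> R"
    using compatible_supD[OF R(3) _ that, of x x] R(1) by (simp add: refl_on_def)
  ultimately show ?thesis by blast
qed

definition join_rel :: "'a::bounded_semilattice_sup_bot rel \<Rightarrow> 'a rel" where
  "join_rel T = {(x, y). (x, sup x y) \<in> T}"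

definition sym_part :: "'a rel \<Rightarrow> 'a rel" where
  "sym_part R = R \<inter> R\<inverse>"

definition le_part :: "'a::bounded_semilattice_sup_bot rel \<Rightarrow> 'a rel" where
  "le_part R = {(x, y). x \<le> y \<and> (x, y) \<in> R}"

lemma join_rel_mono: "R \<subseteq> S \<Longrightarrow> join_rel R \<subseteq> join_rel S"
  unfolding join_rel_def by auto

lemma sym_part_mono: "R \<subseteq> S \<Longrightarrow> sym_part R \<subseteq> sym_part S"
  unfolding sym_part_def by auto

lemma le_part_mono: "R \<subseteq> S \<Longrightarrow> le_part R \<subseteq> le_part S"
  unfolding le_part_def by auto

lemma join_rel_trans:
  assumes "refl T" "trans T" "compatible F T"
    and convex: "\<And>x y z. x \<le> y \<Longrightarrow> y \<le> z \<Longrightarrow> (x, z) \<in> T \<Longrightarrow> (x, y) \<in> T"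
  shows "trans (join_rel T)"
proof (rule transI)
  fix x y z assume "(x, y) \<in> join_rel T" "(y, z) \<in> join_rel T"
  then have xy: "(x, sup x y) \<in> T" and yz: "(y, sup y z) \<in> T" unfolding join_rel_def by auto
  have "(sup x y, sup x (sup y z)) \<in> T"
    using compatible_supD[OF assms(3) _ yz, of x x] assms(1) by (simp add: refl_on_def)
  with xy have "(x, sup x (sup y z)) \<in> T" using assms(2) by (meson transD)
  then have "(x, sup x z) \<in> T" by (rule convex[rotated 2]) (auto intro: le_supI2)
  then show "(x, z) \<in> join_rel T" unfolding join_rel_def by simp
qed

lemma join_rel_in_Don:
  assumes "operators F" "refl T" "trans T" "compatible F T"
    and "\<And>x y z. x \<le> y \<Longrightarrow> y \<le> z \<Longrightarrow> (x, z) \<in> T \<Longrightarrow> (x, y) \<in> T"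
  shows "join_rel T \<in> Don F"
proof -
  have rf: "\<And>a. (a, a) \<in> T" using assms(2) by (simp add: refl_on_def)
  have "refl (join_rel T)" unfolding join_rel_def refl_on_def using rf by auto
  moreover have "compatible F (join_rel T)"
  proof (rule compatibleI)
    fix x y u v assume "(x, y) \<in> join_rel T" "(u, v) \<in> join_rel T"
    then have "(sup x u, sup (sup x y) (sup u v)) \<in> T"
      unfolding join_rel_def using compatible_supD[OF assms(4)] by auto
    then show "(sup x u, sup y v) \<in> join_rel T" unfolding join_rel_def by (simp add: ac_simps)
  next
    fix f x y assume "f \<in> F" "(x, y) \<in> join_rel T"
    then show "(f x, f y) \<in> join_rel T"
      unfolding join_rel_def using compatible_operatorD[OF assms(4)] operators_sup[OF assms(1)]
      by fastforce
  qed
  moreover have "\<And>x y. y \<le> x \<Longrightarrow> (x, y) \<in> join_rel T"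
    unfolding join_rel_def using rf by (simp add: sup_absorb1)
  ultimately show ?thesis
    using join_rel_trans[OF assms(2-5)] unfolding Don_def by auto
qed

lemma join_rel_Con:
  assumes "operators F" "T \<in> Con F"
  shows "join_rel T \<in> Don F"
proof (rule join_rel_in_Don[OF assms(1)])
  show "refl T" "trans T" "compatible F T" using assms(2) unfolding Con_def by auto
qed (rule Con_convex[OF assms(2)])

lemma join_rel_Eon:
  assumes "operators F" "T \<in> Eon F"
  shows "join_rel T \<in> Don F"
  using assms(2) unfolding Eon_def by (intro join_rel_in_Don[OF assms(1)]) blast+

lemma sym_part_Don:
  assumes "R \<in> Don F"
  shows "sym_part R \<in> Con F"
proof -
  have R: "refl R" "trans R" "compatible F R" using assms unfolding Don_def by auto
  have "compatible F (sym_part R)" unfolding sym_part_def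
    by (rule compatibleI) (auto intro: compatible_supD[OF R(3)] compatible_operatorD[OF R(3)])
  with R show ?thesis
    unfolding Con_def sym_part_def refl_on_def sym_def trans_def by blast
qed

lemma le_part_Don:
  assumes "operators F" "R \<in> Don F"
  shows "le_part R \<in> Eon F"
proof -
  have R: "refl R" "trans R" "compatible F R" "\<And>x y. y \<le> x \<Longrightarrow> (x, y) \<in> R"
    using assms(2) unfolding Don_def by auto
  have "compatible F (le_part R)"
  proof (rule compatibleI)
    fix x y u v assume "(x, y) \<in> le_part R" "(u, v) \<in> le_part R"
    then show "(sup x u, sup y v) \<in> le_part R"
      unfolding le_part_def using compatible_supD[OF R(3)] by (auto intro: le_supI1 le_supI2)
  next
    fix f x y assume "f \<in> F" "(x, y) \<in> le_part R"
    then show "(f x, f y) \<in> le_part R"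
      unfolding le_part_def
      using compatible_operatorD[OF R(3)] operators_mono[OF assms(1)] by blast
  qed
  moreover have "(x, y) \<in> le_part R"
    if "x \<le> y" "y \<le> z" "(x, z) \<in> le_part R" for x y z
  proof -
    have "(z, y) \<in> R" using that(2) by (rule R(4))
    with that R(2) show ?thesis unfolding le_part_def by (blast dest: transD)
  qed
  moreover have "refl (le_part R)" using R(1) unfolding le_part_def refl_on_def by auto
  moreover have "trans (le_part R)"
    using R(2) unfolding le_part_def trans_def by (blast intro: order_trans)
  moreover have "\<And>x y. (x, y) \<in> le_part R \<Longrightarrow> x \<le> y" unfolding le_part_def by auto
  ultimately show ?thesis unfolding Eon_def by blast
qed

lemma sym_part_join_rel:
  assumes "T \<in> Con F"
  shows "sym_part (join_rel T) = T"
proof -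
  have T: "refl T" "sym T" "trans T" "compatible F T" using assms unfolding Con_def by auto
  have sup_left: "(x, sup x y) \<in> T" if "(x, y) \<in> T" for x y
    using compatible_supD[OF T(4) _ that, of x x] T(1) by (simp add: refl_on_def)
  show ?thesis
  proof (intro set_eqI iffI)
    fix p assume "p \<in> sym_part (join_rel T)"
    then obtain x y where "p = (x, y)" "(x, sup x y) \<in> T" "(y, sup x y) \<in> T"
      unfolding sym_part_def join_rel_def by (auto simp: sup_commute)
    then show "p \<in> T" using T(2,3) by (meson symD transD)
  next
    fix p assume "p \<in> T"
    then obtain x y where p: "p = (x, y)" "(x, y) \<in> T" "(y, x) \<in> T"
      using T(2) by (cases p) (auto dest: symD)
    then show "p \<in> sym_part (join_rel T)"
      unfolding sym_part_def join_rel_def using sup_left[of x y] sup_left[of y x]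
      by (auto simp: sup_commute)
  qed
qed

lemma join_rel_sym_part:
  assumes "R \<in> Don F"
  shows "join_rel (sym_part R) = R"
proof -
  have "\<And>x y. (sup x y, x) \<in> R" using assms unfolding Don_def by auto
  then show ?thesis using Don_sup_iff[OF assms] unfolding join_rel_def sym_part_def by auto
qed

lemma le_part_join_rel:
  assumes "T \<in> Eon F"
  shows "le_part (join_rel T) = T"
proof -
  have "\<And>x y. (x, y) \<in> T \<Longrightarrow> x \<le> y" using assms unfolding Eon_def by blast
  then show ?thesis unfolding le_part_def join_rel_def by (auto simp: sup_absorb2)
qed

lemma join_rel_le_part:
  assumes "R \<in> Don F"
  shows "join_rel (le_part R) = R"
  using Don_sup_iff[OF assms] unfolding join_rel_def le_part_def by auto

theorem lemma3p4:
  fixes F :: "('a::bounded_semilattice_sup_bot \<Rightarrow> 'a) set"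
  assumes "operators F"
  shows "incl_iso (Con F) (Don F) \<and> incl_iso (Don F) (Eon F)"
proof
  show "incl_iso (Con F) (Don F)"
    by (rule incl_isoI[where g = join_rel and k = sym_part])
      (simp_all add: join_rel_Con[OF assms] sym_part_Don sym_part_join_rel join_rel_sym_part
        join_rel_mono sym_part_mono)
  show "incl_iso (Don F) (Eon F)"
    by (rule incl_isoI[where g = le_part and k = join_rel])
      (simp_all add: le_part_Don[OF assms] join_rel_Eon[OF assms] join_rel_le_part
        le_part_join_rel le_part_mono join_rel_mono)
qed

end
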